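(* Let $s\ge1$ and let $A:[0,\infty)\to\mathbb R$ be continuous with $A(t)\ge-(t+1)^s$ for all $t\ge0$. Let $(d,\rho)$ solve $$\dot d=-\tfrac12 d^2+A(t)\rho^2-\rho+1,\qquad \dot\rho=-d\rho,$$ and let $(b,a)$ solve $$\dot b=-\tfrac12 b^2-(t+1)^s a^2-a+1,\qquad \dot a=-ba.$$ If $b(0)<d(0)$ and $0<\rho(0)<a(0)$, then $b(t)<d(t)$ and $0<\rho(t)<a(t)$ for all $t>0$ at which both solutions are defined. *)

theory Defs
  imports "HOL-Analysis.Analysis"
begin

end

theory Submission
  imports Defs
begin

text \<open>
  Both gaps \<open>u = d - b\<close> and \<open>v = a - \<rho>\<close> satisfy linear differential inequalities for as long
  as both stay positive: \<open>u' \<ge> -((d + b)/2) u\<close> because \<open>A \<rho>\<^sup>2 \<ge> -(t + 1)\<^sup>s a\<^sup>2\<close> and \<open>a > \<rho>\<close>,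
  and \<open>v' = -b v + u \<rho> \<ge> -b v\<close> because \<open>\<rho> > 0\<close>. An integrating factor shows that a positive
  solution of such an inequality cannot reach zero, so neither gap can close first.
\<close>

lemma nonneg_derivative_within_imp_le:
  fixes f f' :: "real \<Rightarrow> real"
  assumes "a \<le> b"
    and der: "\<And>x. x \<in> {a..b} \<Longrightarrow> (f has_real_derivative f' x) (at x within {a..b})"
    and nonneg: "\<And>x. a < x \<Longrightarrow> x < b \<Longrightarrow> f' x \<ge> 0"
  shows "f a \<le> f b"
proof (cases "a = b")
  case False
  then have "a < b" using \<open>a \<le> b\<close> by simp
  have "\<exists>x\<in>{a<..<b}. f b - f a = f' x * (b - a)"
    by (rule mvt_simple[OF \<open>a < b\<close>]) (use der in \<open>auto simp: has_field_derivative_def\<close>)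
  then obtain x where "a < x" "x < b" "f b - f a = f' x * (b - a)" by auto
  moreover have "f' x * (b - a) \<ge> 0" using nonneg[of x] \<open>a < x\<close> \<open>x < b\<close> by simp
  ultimately show ?thesis by linarith
qed simp

lemma linear_differential_ineq_imp_pos:
  fixes f f' g :: "real \<Rightarrow> real"
  assumes "a \<le> b" and ab_S: "{a..b} \<subseteq> S"
    and g: "continuous_on S g"
    and der: "\<And>x. x \<in> {a..b} \<Longrightarrow> (f has_real_derivative f' x) (at x within S)"
    and ineq: "\<And>x. a < x \<Longrightarrow> x < b \<Longrightarrow> f' x \<ge> - g x * f x"
    and "f a > 0"
  shows "f b > 0"
proof -
  define G where "G x = integral {a..x} g" for x
  have G': "(G has_real_derivative g x) (at x within {a..b})" if "x \<in> {a..b}" for x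
    unfolding G_def
    by (rule integral_has_real_derivative[OF continuous_on_subset[OF g ab_S] that])
  have "f a * exp (G a) \<le> f b * exp (G b)"
  proof (rule nonneg_derivative_within_imp_le[OF \<open>a \<le> b\<close>])
    fix x assume "x \<in> {a..b}"
    show "((\<lambda>x. f x * exp (G x)) has_real_derivative (f' x + g x * f x) * exp (G x))
        (at x within {a..b})"
      using has_field_derivative_subset[OF der[OF \<open>x \<in> {a..b}\<close>] ab_S] G'[OF \<open>x \<in> {a..b}\<close>]
      by (auto intro!: derivative_eq_intros simp: algebra_simps)
  next
    fix x assume "a < x" "x < b"
    then show "(f' x + g x * f x) * exp (G x) \<ge> 0"
      using ineq[of x] by simp
  qed
  moreover have "f a * exp (G a) > 0"
    using \<open>f a > 0\<close> by simp
  ultimately have "f b * exp (G b) > 0" by linarith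
  then show ?thesis by (simp add: zero_less_mult_iff)
qed

lemma continuous_induction_pos:
  fixes w :: "real \<Rightarrow> real"
  assumes "a \<le> b" and cont: "continuous_on {a..b} w" and "w a > 0"
    and step: "\<And>T. a < T \<Longrightarrow> T \<le> b \<Longrightarrow> (\<And>x. a < x \<Longrightarrow> x < T \<Longrightarrow> w x > 0) \<Longrightarrow> w T > 0"
  shows "w b > 0"
proof (rule ccontr)
  define Z where "Z = {a..b} \<inter> w -` {..0}"
  assume "\<not> w b > 0"
  then have "Z \<noteq> {}" using \<open>a \<le> b\<close> by (auto simp: Z_def)
  moreover have "bdd_below Z" by (auto simp: Z_def intro: bdd_belowI[of _ a])
  moreover have "closed Z"
    unfolding Z_def by (rule continuous_closed_preimage[OF cont]) auto
  ultimately have "Inf Z \<in> Z" by (rule closed_contains_Inf)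
  then have "a < Inf Z" "Inf Z \<le> b" "w (Inf Z) \<le> 0"
    using \<open>w a > 0\<close> by (auto simp: Z_def order.order_iff_strict)
  moreover have "w x > 0" if "a < x" "x < Inf Z" for x
    using cInf_lower[OF _ \<open>bdd_below Z\<close>, of x] that \<open>Inf Z \<le> b\<close> by (force simp: Z_def)
  ultimately show False using step by fastforce
qed

lemma riccati_gap_ineq:
  fixes A c d \<rho> b a :: real
  assumes "A \<ge> - c" "c \<ge> 0" "0 < \<rho>" "\<rho> < a"
  shows "(- (1/2) * d^2 + A * \<rho>^2 - \<rho> + 1) - (- (1/2) * b^2 - c * a^2 - a + 1)
    \<ge> - ((d + b) / 2) * (d - b)"
proof -
  have "\<rho>^2 \<le> a^2"
    using assms(3,4) by (intro power_mono) auto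
  then have "- c * a^2 \<le> - c * \<rho>^2"
    using assms(2) by (simp add: mult_left_mono)
  also have "\<dots> \<le> A * \<rho>^2"
    using assms(1) by (intro mult_right_mono) auto
  finally show ?thesis
    using assms(4) by (simp add: power2_eq_square field_simps)
qed

lemma riccati_comparison:
  fixes A c d \<rho> b a :: "real \<Rightarrow> real" and t :: real
  assumes "0 \<le> t"
    and d': "\<And>x. x \<in> {0..t} \<Longrightarrow>
        (d has_real_derivative (- (1/2) * (d x)^2 + A x * (\<rho> x)^2 - \<rho> x + 1)) (at x within {0..t})"
    and \<rho>': "\<And>x. x \<in> {0..t} \<Longrightarrow> (\<rho> has_real_derivative (- d x * \<rho> x)) (at x within {0..t})"
    and b': "\<And>x. x \<in> {0..t} \<Longrightarrow>
        (b has_real_derivative (- (1/2) * (b x)^2 - c x * (a x)^2 - a x + 1)) (at x within {0..t})"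
    and a': "\<And>x. x \<in> {0..t} \<Longrightarrow> (a has_real_derivative (- b x * a x)) (at x within {0..t})"
    and A_lb: "\<And>x. x \<in> {0..t} \<Longrightarrow> A x \<ge> - c x"
    and c_nonneg: "\<And>x. x \<in> {0..t} \<Longrightarrow> c x \<ge> 0"
    and init: "b 0 < d 0" "0 < \<rho> 0" "\<rho> 0 < a 0"
  shows "b t < d t \<and> 0 < \<rho> t \<and> \<rho> t < a t"
proof -
  have cont: "continuous_on {0..t} d" "continuous_on {0..t} \<rho>"
      "continuous_on {0..t} b" "continuous_on {0..t} a"
    by (rule DERIV_continuous_on, fact)+
  have \<rho>_pos: "\<rho> x > 0" if "x \<in> {0..t}" for x
    by (rule linear_differential_ineq_imp_pos[where g = d]) (use that \<rho>' cont init in auto)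
  define w where "w x = min (d x - b x) (a x - \<rho> x)" for x
  have "w t > 0"
  proof (rule continuous_induction_pos[OF \<open>0 \<le> t\<close>])
    show "continuous_on {0..t} w"
      unfolding w_def using cont by (intro continuous_intros)
    show "w 0 > 0" using init by (simp add: w_def)
  next
    fix T assume "0 < T" "T \<le> t" and w_pos: "\<And>x. 0 < x \<Longrightarrow> x < T \<Longrightarrow> w x > 0"
    have sub: "{0..T} \<subseteq> {0..t}" using \<open>T \<le> t\<close> by auto
    have "d T - b T > 0"
    proof (rule linear_differential_ineq_imp_pos[OF _ sub, where g = "\<lambda>x. (d x + b x) / 2"])
      show "continuous_on {0..t} (\<lambda>x. (d x + b x) / 2)"
        using cont by (intro continuous_intros) auto
      show "((\<lambda>x. d x - b x) has_real_derivative
          (- (1/2) * (d x)^2 + A x * (\<rho> x)^2 - \<rho> x + 1)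
          - (- (1/2) * (b x)^2 - c x * (a x)^2 - a x + 1)) (at x within {0..t})"
        if "x \<in> {0..T}" for x
        using that sub by (intro DERIV_diff d' b') auto
      fix x assume "0 < x" "x < T"
      then have x: "x \<in> {0..t}" "\<rho> x < a x"
        using w_pos[of x] \<open>T \<le> t\<close> by (auto simp: w_def)
      then show "(- (1/2) * (d x)^2 + A x * (\<rho> x)^2 - \<rho> x + 1)
          - (- (1/2) * (b x)^2 - c x * (a x)^2 - a x + 1) \<ge> - ((d x + b x) / 2) * (d x - b x)"
        using \<rho>_pos[OF x(1)] A_lb[OF x(1)] c_nonneg[OF x(1)] by (intro riccati_gap_ineq) auto
    qed (use \<open>0 < T\<close> init in auto)
    moreover have "a T - \<rho> T > 0"
    proof (rule linear_differential_ineq_imp_pos[OF _ sub \<open>continuous_on {0..t} b\<close>])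
      show "((\<lambda>x. a x - \<rho> x) has_real_derivative - b x * a x - - d x * \<rho> x) (at x within {0..t})"
        if "x \<in> {0..T}" for x
        using that sub by (intro DERIV_diff a' \<rho>') auto
      fix x assume "0 < x" "x < T"
      then have x: "x \<in> {0..t}" "b x < d x"
        using w_pos[of x] \<open>T \<le> t\<close> by (auto simp: w_def)
      then have "(d x - b x) * \<rho> x \<ge> 0"
        using \<rho>_pos[OF x(1)] by simp
      then show "- b x * a x - - d x * \<rho> x \<ge> - b x * (a x - \<rho> x)"
        by (simp add: algebra_simps)
    qed (use \<open>0 < T\<close> init in auto)
    ultimately show "w T > 0" by (simp add: w_def)
  qed
  then show ?thesis
    using \<rho>_pos[of t] \<open>0 \<le> t\<close> by (auto simp: w_def)
qed

theorem lemma4p4: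
  fixes s :: real and A d \<rho> b a :: "real \<Rightarrow> real" and I J :: "real set"
  assumes s: "s \<ge> 1"
    and A_cont: "continuous_on {0..} A"
    and A_lb: "\<And>t. t \<ge> 0 \<Longrightarrow> A t \<ge> - ((t + 1) powr s)"
    and I: "is_interval I" "0 \<in> I" "I \<subseteq> {0..}"
    and J: "is_interval J" "0 \<in> J" "J \<subseteq> {0..}"
    and d_ode: "\<And>t. t \<in> I \<Longrightarrow>
        (d has_real_derivative (- (1/2) * (d t)^2 + A t * (\<rho> t)^2 - \<rho> t + 1)) (at t within I)"
    and \<rho>_ode: "\<And>t. t \<in> I \<Longrightarrow> (\<rho> has_real_derivative (- d t * \<rho> t)) (at t within I)"
    and b_ode: "\<And>t. t \<in> J \<Longrightarrow>
        (b has_real_derivative (- (1/2) * (b t)^2 - (t + 1) powr s * (a t)^2 - a t + 1)) (at t within J)"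
    and a_ode: "\<And>t. t \<in> J \<Longrightarrow> (a has_real_derivative (- b t * a t)) (at t within J)"
    and init: "b 0 < d 0" "0 < \<rho> 0" "\<rho> 0 < a 0"
  shows "\<forall>t \<in> I \<inter> J. t > 0 \<longrightarrow> b t < d t \<and> 0 < \<rho> t \<and> \<rho> t < a t"
proof (intro ballI impI)
  fix t assume t: "t \<in> I \<inter> J" "0 < t"
  then have KI: "{0..t} \<subseteq> I" and KJ: "{0..t} \<subseteq> J"
    using interval_subset_is_interval[OF I(1), of 0 t] interval_subset_is_interval[OF J(1), of 0 t]
      I(2) J(2) by simp_all
  show "b t < d t \<and> 0 < \<rho> t \<and> \<rho> t < a t"
  proof (rule riccati_comparison
      [where A = A and c = "\<lambda>x. (x + 1) powr s" and d = d and \<rho> = \<rho> and b = b and a = a])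
    fix x assume x: "x \<in> {0..t}"
    show "(d has_real_derivative (- (1/2) * (d x)^2 + A x * (\<rho> x)^2 - \<rho> x + 1))
        (at x within {0..t})"
      by (rule has_field_derivative_subset[OF d_ode[OF subsetD[OF KI x]] KI])
    show "(\<rho> has_real_derivative (- d x * \<rho> x)) (at x within {0..t})"
      by (rule has_field_derivative_subset[OF \<rho>_ode[OF subsetD[OF KI x]] KI])
    show "(b has_real_derivative (- (1/2) * (b x)^2 - (x + 1) powr s * (a x)^2 - a x + 1))
        (at x within {0..t})"
      by (rule has_field_derivative_subset[OF b_ode[OF subsetD[OF KJ x]] KJ])
    show "(a has_real_derivative (- b x * a x)) (at x within {0..t})"
      by (rule has_field_derivative_subset[OF a_ode[OF subsetD[OF KJ x]] KJ])
    show "A x \<ge> - ((x + 1) powr s)"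
      using A_lb x by simp
  qed (use t init in auto)
qed

end
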